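(* Let $\pi$ be irreducible combinatorial data, $w\in\mathbb R^{\mathcal A}$, and let $\underline\gamma^*$ be a finite path in the Rauzy diagram starting at $\pi$. There exists an affine interval exchange map with data $\pi$ and slope vector $\exp w$ such that the first steps of its Rauzy–Veech algorithm are defined and follow the path $\underline\gamma^*$ if and only if there exists $\lambda$ with $\lambda_\alpha>0$ for all $\alpha$ and $\sum_\alpha\lambda_\alpha w_\alpha=0$ such that the first steps of the Rauzy–Veech algorithm of the standard i.e.m. $T_{\pi,\lambda}$ are defined and follow $\underline\gamma^*$.
   Context: Affine i.e.m. with data $\pi$: map on an interval $I$ sending each interval $I^t_\alpha$ of a partition ordered by $\pi_t$ increasingly and affinely onto the interval $I^b_\alpha$ of a partition ordered by $\pi_b$; slope vector $\exp w$ means $|I^b_\alpha|=e^{w_\alpha}|I^t_\alpha|$. Standard i.e.m. $T_{\pi,\lambda}$: the case $|I^t_\alpha|=|I^b_\alpha|=\lambda_\alpha$ (a translation on each piece). Rauzy–Veech step: let $\pi_t(\alpha_t)=\pi_b(\alpha_b)=d$ and let $u^t_{d-1},u^b_{d-1}$ be the left endpoints of $I^t_{\alpha_t}$, $I^b_{\alpha_b}$; if they differ, replace the map by its first return map to $(0,\max(u^t_{d-1},u^b_{d-1}))$, which is again an (affine) i.e.m. with data $R_t(\pi)$ if $u^t_{d-1}<u^b_{d-1}$ (top type: $\pi_t$ unchanged, $\alpha_b$ moved in the bottom line to just after $\alpha_t$) or $R_b(\pi)$ if $u^b_{d-1}<u^t_{d-1}$ (bottom type, symmetric). The arrows $\pi\to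 R_t(\pi)$, $\pi\to R_b(\pi)$ form the Rauzy diagram, and the successive steps define a path in it. *)

theory Defs
  imports Complex_Main
begin

definition comb_data :: "('a::finite \<Rightarrow> nat) \<Rightarrow> ('a \<Rightarrow> nat) \<Rightarrow> bool" where
  "comb_data pt pb \<longleftrightarrow> bij_betw pt UNIV {1..card (UNIV :: 'a set)} \<and> bij_betw pb UNIV {1..card (UNIV :: 'a set)}"

definition irreducible :: "('a::finite \<Rightarrow> nat) \<Rightarrow> ('a \<Rightarrow> nat) \<Rightarrow> bool" where
  "irreducible pt pb \<longleftrightarrow>
     (\<forall>k. 1 \<le> k \<and> k < card (UNIV :: 'a set) \<longrightarrow> {a. pt a \<le> k} \<noteq> {a. pb a \<le> k})"

text \<open>Arrows of the Rauzy diagram: top type or bottom type.  A finite path in the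
  Rauzy diagram starting at \<pi> is the list of the types of its successive arrows.\<close>
datatype rtype = TopT | BotT

text \<open>State of an affine i.e.m.: (\<pi>_t, \<pi>_b, top lengths lt, log-slopes w), where
  |I^t_\<alpha>| = lt \<alpha> and |I^b_\<alpha>| = exp (w \<alpha>) * lt \<alpha>.  A standard i.e.m. T_{\<pi>,\<lambda>}
  is the state (\<pi>_t, \<pi>_b, \<lambda>, 0).\<close>
type_synonym 'a aiem = "('a \<Rightarrow> nat) \<times> ('a \<Rightarrow> nat) \<times> ('a \<Rightarrow> real) \<times> ('a \<Rightarrow> real)"

definition is_aiem :: "('a::finite \<Rightarrow> real) \<Rightarrow> ('a \<Rightarrow> real) \<Rightarrow> bool" where
  "is_aiem lt w \<longleftrightarrow> (\<forall>a. lt a > 0) \<and> (\<Sum>a\<in>UNIV. exp (w a) * lt a) = (\<Sum>a\<in>UNIV. lt a)"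

definition alpha_t :: "('a::finite) aiem \<Rightarrow> 'a" where
  "alpha_t s = (case s of (pt, pb, lt, w) \<Rightarrow> (THE a. pt a = card (UNIV :: 'a set)))"

definition alpha_b :: "('a::finite) aiem \<Rightarrow> 'a" where
  "alpha_b s = (case s of (pt, pb, lt, w) \<Rightarrow> (THE a. pb a = card (UNIV :: 'a set)))"

definition u_t :: "('a::finite) aiem \<Rightarrow> real" where
  "u_t s = (case s of (pt, pb, lt, w) \<Rightarrow> (\<Sum>a\<in>{a. pt a < card (UNIV :: 'a set)}. lt a))"

definition u_b :: "('a::finite) aiem \<Rightarrow> real" where
  "u_b s = (case s of (pt, pb, lt, w) \<Rightarrow> (\<Sum>a\<in>{a. pb a < card (UNIV :: 'a set)}. exp (w a) * lt a))"

text \<open>Move letter x to the position just after letter y (x currently in last position).\<close>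
definition move_after :: "('a \<Rightarrow> nat) \<Rightarrow> 'a \<Rightarrow> 'a \<Rightarrow> ('a \<Rightarrow> nat)" where
  "move_after p x y = (\<lambda>a. if a = x then p y + 1 else if p a > p y then p a + 1 else p a)"

text \<open>One Rauzy--Veech step: data of the first return map to (0, max(u^t,u^b)).
  Top type (u^t < u^b): the piece I^t_{\<alpha>_t} is shortened by |I^b_{\<alpha>_b}|, and the
  letter \<alpha>_b (now mapped by T^2) gets slope w_{\<alpha>_b}+w_{\<alpha>_t}.
  Bottom type (u^b < u^t): the piece I^t_{\<alpha>_b} splits, its right part (preimage of
  I^t_{\<alpha>_t}, of length |I^t_{\<alpha>_t}| e^{-w_{\<alpha>_b}}) becomes the new \<alpha>_t piece with
  slope w_{\<alpha>_t}+w_{\<alpha>_b}.\<close>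
definition rv_step :: "('a::finite) aiem \<Rightarrow> 'a aiem" where
  "rv_step s = (case s of (pt, pb, lt, w) \<Rightarrow>
     let aT = alpha_t s; aB = alpha_b s in
     if u_t s < u_b s then
       (pt, move_after pb aB aT, lt(aT := lt aT - exp (w aB) * lt aB), w(aB := w aB + w aT))
     else
       (move_after pt aT aB, pb,
        lt(aT := lt aT * exp (- w aB), aB := lt aB - lt aT * exp (- w aB)),
        w(aT := w aT + w aB)))"

definition rv_type :: "('a::finite) aiem \<Rightarrow> rtype" where
  "rv_type s = (if u_t s < u_b s then TopT else BotT)"

fun rv_follows :: "('a::finite) aiem \<Rightarrow> rtype list \<Rightarrow> bool" where
  "rv_follows s [] = True"
| "rv_follows s (t # ts) \<longleftrightarrow> u_t s \<noteq> u_b s \<and> rv_type s = t \<and> rv_follows (rv_step s) ts"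

end

theory Submission
  imports Defs "HOL-Library.Cardinality"
begin

text \<open>Along a Rauzy path the combinatorial data and the log-slopes evolve independently of the
  lengths, and for a step of prescribed type the length update is invertible.  Hence an affine
  i.e.m. with slopes exp w follows the path iff the final log-slope vector v carries an affine
  i.e.m., i.e. iff some positive vector x is orthogonal to v.  Pulling back such an x with zero
  slopes yields a standard i.e.m. T_{\<pi>,\<lambda>} following the path; as lengths and log-slopes
  transform contragrediently, the pairing of \<lambda> with w equals that of x with v, which is 0.\<close>

definition ranking :: "('a::finite \<Rightarrow> nat) \<Rightarrow> bool" where
  "ranking p \<longleftrightarrow> bij_betw p UNIV {1..CARD('a)}"

lemma comb_data_iff_ranking: "comb_data pt pb \<longleftrightarrow> ranking pt \<and> ranking pb"
  unfolding comb_data_def ranking_def ..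

lemma ranking_bounds: "ranking (p::'a::finite \<Rightarrow> nat) \<Longrightarrow> 1 \<le> p a \<and> p a \<le> CARD('a)"
  unfolding ranking_def bij_betw_def by auto

lemma ranking_inj: "ranking p \<Longrightarrow> inj p"
  unfolding ranking_def bij_betw_def by simp

definition last_letter :: "('a::finite \<Rightarrow> nat) \<Rightarrow> 'a" where
  "last_letter p = (THE a. p a = CARD('a))"

lemma ranking_last_letter: "ranking (p::'a::finite \<Rightarrow> nat) \<Longrightarrow> p (last_letter p) = CARD('a)"
proof -
  assume p: "ranking p"
  have "CARD('a) \<in> range p"
    using p finite_UNIV_card_ge_0[where 'a='a] unfolding ranking_def bij_betw_def by auto
  then obtain a where "p a = CARD('a)"
    by auto
  then have "\<exists>!a. p a = CARD('a)"
    using injD[OF ranking_inj[OF p]] by metis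
  then show ?thesis
    unfolding last_letter_def by (rule theI')
qed

lemma ranking_eq_card_iff:
  "ranking (p::'a::finite \<Rightarrow> nat) \<Longrightarrow> p a = CARD('a) \<longleftrightarrow> a = last_letter p"
  using ranking_last_letter injD[OF ranking_inj] by metis

lemma ranking_less_card_iff:
  "ranking (p::'a::finite \<Rightarrow> nat) \<Longrightarrow> p a < CARD('a) \<longleftrightarrow> a \<noteq> last_letter p"
  using ranking_bounds[of p a] ranking_eq_card_iff[of p a] by linarith

lemma ranking_less_card_set:
  "ranking (p::'a::finite \<Rightarrow> nat) \<Longrightarrow> {a. p a < CARD('a)} = UNIV - {last_letter p}"
  using ranking_less_card_iff by blast

lemma ranking_move_after:
  assumes q: "ranking (q::'a::finite \<Rightarrow> nat)" and x: "q x = CARD('a)" and "x \<noteq> y"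
  shows "ranking (move_after q x y)"
proof -
  let ?m = "move_after q x y"
  have qy: "q y < CARD('a)"
    using assms ranking_eq_card_iff ranking_less_card_iff by metis
  have "inj ?m"
    using injD[OF ranking_inj[OF q]] qy by (intro injI) (auto simp: move_after_def split: if_splits)
  moreover have "?m a \<in> {1..CARD('a)}" for a
  proof -
    have "a \<noteq> x \<Longrightarrow> q a < CARD('a)"
      using ranking_less_card_iff[OF q] ranking_eq_card_iff[OF q] x by metis
    then show ?thesis
      using ranking_bounds[OF q, of a] qy by (auto simp: move_after_def)
  qed
  ultimately have "range ?m = {1..CARD('a)}"
    by (intro card_subset_eq) (auto simp: card_image)
  with \<open>inj ?m\<close> show ?thesis
    unfolding ranking_def bij_betw_def by simp
qed

lemma irreducible_sym: "irreducible p q \<Longrightarrow> irreducible q p"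
  unfolding irreducible_def by metis

text \<open>An initial segment of length k < d of move_after q x y is either one of q or contains y,
  which lies in no initial segment of length k < d of p.\<close>
lemma irreducible_move_after:
  fixes p q :: "'a::finite \<Rightarrow> nat"
  assumes irr: "irreducible p q" and "q x = CARD('a)" "p y = CARD('a)" "x \<noteq> y"
  shows "irreducible p (move_after q x y)"
  unfolding irreducible_def
proof (intro allI impI)
  fix k assume k: "1 \<le> k \<and> k < CARD('a)"
  show "{a. p a \<le> k} \<noteq> {a. move_after q x y a \<le> k}"
  proof (cases "k \<le> q y")
    case True
    then have "{a. move_after q x y a \<le> k} = {a. q a \<le> k}"
      using k assms(2) by (auto simp: move_after_def)
    then show ?thesis
      using irr k unfolding irreducible_def by auto
  next
    case False
    then have "y \<in> {a. move_after q x y a \<le> k}"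
      using assms(4) by (simp add: move_after_def)
    moreover have "y \<notin> {a. p a \<le> k}"
      using assms(3) k by simp
    ultimately show ?thesis
      by blast
  qed
qed

lemma irreducible_last_letters_distinct:
  fixes pt pb :: "'a::finite \<Rightarrow> nat"
  assumes "ranking pt" "ranking pb" "irreducible pt pb" "2 \<le> CARD('a)"
  shows "last_letter pt \<noteq> last_letter pb"
proof
  assume "last_letter pt = last_letter pb"
  moreover have "n \<le> CARD('a) - 1 \<longleftrightarrow> n < CARD('a)" for n
    using assms(4) by linarith
  ultimately have "{a. pt a \<le> CARD('a) - 1} = {a. pb a \<le> CARD('a) - 1}"
    using ranking_less_card_set[OF assms(1)] ranking_less_card_set[OF assms(2)] by simp
  moreover have "1 \<le> CARD('a) - 1" "CARD('a) - 1 < CARD('a)"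
    using assms(4) by linarith+
  ultimately show False
    using assms(3) unfolding irreducible_def by blast
qed

lemma u_t_neq_u_b_card_ge_2:
  fixes pt pb :: "'a::finite \<Rightarrow> nat"
  assumes "comb_data pt pb" and "u_t (pt, pb, lt, w) \<noteq> u_b (pt, pb, lt, w)"
  shows "2 \<le> CARD('a)"
proof (rule ccontr)
  assume "\<not> 2 \<le> CARD('a)"
  then have "CARD('a) \<le> 1"
    by simp
  then have "{a. p a < CARD('a)} = {}" if "ranking p" for p :: "'a \<Rightarrow> nat"
    using order_trans[OF _ conjunct1[OF ranking_bounds[OF that]]] by (simp add: not_less)
  with assms show False
    unfolding comb_data_iff_ranking u_t_def u_b_def by simp
qed

text \<open>The step rv_step with its type as an argument, so that a path can be replayed
  for arbitrary lengths.\<close>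
fun rauzy_step :: "rtype \<Rightarrow> ('a::finite) aiem \<Rightarrow> 'a aiem" where
  "rauzy_step TopT (pt, pb, lt, w) =
     (let T = last_letter pt; B = last_letter pb in
      (pt, move_after pb B T, lt(T := lt T - exp (w B) * lt B), w(B := w B + w T)))"
| "rauzy_step BotT (pt, pb, lt, w) =
     (let T = last_letter pt; B = last_letter pb in
      (move_after pt T B, pb, lt(T := lt T * exp (- w B), B := lt B - lt T * exp (- w B)),
       w(T := w T + w B)))"

lemma rv_step_eq_rauzy_step: "rv_step s = rauzy_step (rv_type s) s"
  by (cases s) (simp add: rv_step_def rv_type_def alpha_t_def alpha_b_def last_letter_def Let_def)

lemma rauzy_step_comb_data:
  fixes pt pb :: "'a::finite \<Rightarrow> nat"
  assumes "comb_data pt pb" "irreducible pt pb" "2 \<le> CARD('a)"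
    and "rauzy_step t (pt, pb, lt, w) = (pt', pb', lt', w')"
  shows "comb_data pt' pb' \<and> irreducible pt' pb'"
proof -
  have rt: "ranking pt" and rb: "ranking pb"
    using assms(1) by (simp_all add: comb_data_iff_ranking)
  note last = ranking_last_letter[OF rt] ranking_last_letter[OF rb]
  have dist: "last_letter pt \<noteq> last_letter pb"
    using irreducible_last_letters_distinct[OF rt rb assms(2,3)] .
  show ?thesis
  proof (cases t)
    case TopT
    then have "pt' = pt" "pb' = move_after pb (last_letter pb) (last_letter pt)"
      using assms(4) by (auto simp: Let_def)
    then show ?thesis
      using rt ranking_move_after[OF rb last(2) dist[symmetric]]
        irreducible_move_after[OF assms(2) last(2,1) dist[symmetric]]
      by (simp add: comb_data_iff_ranking)
  next
    case BotT
    then have "pb' = pb" "pt' = move_after pt (last_letter pt) (last_letter pb)"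
      using assms(4) by (auto simp: Let_def)
    then show ?thesis
      using rb ranking_move_after[OF rt last(1) dist]
        irreducible_sym[OF irreducible_move_after[OF irreducible_sym[OF assms(2)] last dist]]
      by (simp add: comb_data_iff_ranking)
  qed
qed

lemma u_t_eq: "ranking pt \<Longrightarrow> u_t (pt, pb, lt, w) = sum lt UNIV - lt (last_letter pt)"
  unfolding u_t_def by (simp add: ranking_less_card_set sum_diff1)

lemma u_b_eq:
  "ranking pb \<Longrightarrow>
   u_b (pt, pb, lt, w) = (\<Sum>a\<in>UNIV. exp (w a) * lt a) - exp (w (last_letter pb)) * lt (last_letter pb)"
  unfolding u_b_def by (simp add: ranking_less_card_set sum_diff1)

lemma is_aiem_u_t_minus_u_b:
  assumes "comb_data pt pb" and "is_aiem lt w"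
  shows "u_t (pt, pb, lt, w) - u_b (pt, pb, lt, w) =
         exp (w (last_letter pb)) * lt (last_letter pb) - lt (last_letter pt)"
proof -
  have "ranking pt" "ranking pb"
    using assms(1) by (simp_all add: comb_data_iff_ranking)
  moreover have "(\<Sum>a\<in>UNIV. exp (w a) * lt a) = sum lt UNIV"
    using assms(2) by (simp add: is_aiem_def)
  ultimately show ?thesis
    by (simp add: u_t_eq u_b_eq)
qed

lemma sum_UNIV_change_two_points:
  fixes f g :: "'a::finite \<Rightarrow> 'b::ab_group_add"
  assumes "x \<noteq> y" and "\<And>a. a \<noteq> x \<Longrightarrow> a \<noteq> y \<Longrightarrow> g a = f a"
  shows "sum g UNIV = sum f UNIV + (g x - f x) + (g y - f y)"
proof -
  have "sum g UNIV - sum f UNIV = (\<Sum>a\<in>{x, y}. g a - f a)"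
    unfolding sum_subtractf[symmetric] using assms(2) by (intro sum.mono_neutral_right) auto
  then show ?thesis
    using assms(1) by (simp add: algebra_simps)
qed

lemma rauzy_step_length_difference:
  assumes "last_letter pt \<noteq> last_letter pb" and "rauzy_step t (pt, pb, lt, w) = (pt', pb', lt', w')"
  shows "(\<Sum>a\<in>UNIV. exp (w' a) * lt' a) - sum lt' UNIV = (\<Sum>a\<in>UNIV. exp (w a) * lt a) - sum lt UNIV"
proof -
  define T B where "T = last_letter pt" and "B = last_letter pb"
  have TB: "T \<noteq> B"
    using assms(1) by (simp add: T_def B_def)
  have unchanged: "lt' a = lt a" "w' a = w a" if "a \<noteq> T" "a \<noteq> B" for a
    using assms(2) that by (cases t; auto simp: Let_def T_def B_def)+
  have "(\<Sum>a\<in>UNIV. exp (w' a) * lt' a) = (\<Sum>a\<in>UNIV. exp (w a) * lt a)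
     + (exp (w' T) * lt' T - exp (w T) * lt T) + (exp (w' B) * lt' B - exp (w B) * lt B)"
    using unchanged by (intro sum_UNIV_change_two_points[OF TB]) simp
  moreover have "sum lt' UNIV = sum lt UNIV + (lt' T - lt T) + (lt' B - lt B)"
    using unchanged by (intro sum_UNIV_change_two_points[OF TB]) simp
  moreover have "exp (w' T) * lt' T + exp (w' B) * lt' B - lt' T - lt' B
      = exp (w T) * lt T + exp (w B) * lt B - lt T - lt B"
  proof (cases t)
    case TopT
    then show ?thesis
      using assms(2) TB by (auto simp: Let_def T_def B_def exp_add algebra_simps)
  next
    case BotT
    then show ?thesis
      using assms(2) TB by (auto simp: Let_def T_def B_def exp_add exp_minus field_simps)
  qed
  ultimately show ?thesis
    by (simp add: algebra_simps)
qed

lemma rv_step_is_aiem: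
  assumes cd: "comb_data pt pb" and irr: "irreducible pt pb" and aiem: "is_aiem lt w"
    and defined: "u_t (pt, pb, lt, w) \<noteq> u_b (pt, pb, lt, w)"
    and step: "rv_step (pt, pb, lt, w) = (pt', pb', lt', w')"
  shows "is_aiem lt' w'"
proof -
  let ?T = "last_letter pt" and ?B = "last_letter pb"
  have TB: "?T \<noteq> ?B"
    using irreducible_last_letters_distinct[OF _ _ irr u_t_neq_u_b_card_ge_2[OF cd defined]] cd
    by (simp add: comb_data_iff_ranking)
  have step': "rauzy_step (rv_type (pt, pb, lt, w)) (pt, pb, lt, w) = (pt', pb', lt', w')"
    using step by (simp add: rv_step_eq_rauzy_step)
  have pos: "\<forall>a. 0 < lt a"
    using aiem by (simp add: is_aiem_def)
  have diff: "u_t (pt, pb, lt, w) - u_b (pt, pb, lt, w) = exp (w ?B) * lt ?B - lt ?T"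
    using is_aiem_u_t_minus_u_b[OF cd aiem] .
  have "\<forall>a. 0 < lt' a"
  proof (cases "u_t (pt, pb, lt, w) < u_b (pt, pb, lt, w)")
    case True
    then have "lt' = lt(?T := lt ?T - exp (w ?B) * lt ?B)"
      using step' by (auto simp: rv_type_def Let_def)
    then show ?thesis
      using pos True diff by simp
  next
    case False
    then have lt': "lt' = lt(?T := lt ?T * exp (- w ?B), ?B := lt ?B - lt ?T * exp (- w ?B))"
      using step' by (auto simp: rv_type_def Let_def)
    have "lt ?B - lt ?T * exp (- w ?B) = (exp (w ?B) * lt ?B - lt ?T) * exp (- w ?B)"
      by (simp add: algebra_simps exp_minus)
    moreover have "exp (w ?B) * lt ?B - lt ?T > 0"
      using False defined diff by linarith
    ultimately show ?thesis
      using pos lt' TB by simp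
  qed
  moreover have "(\<Sum>a\<in>UNIV. exp (w' a) * lt' a) - sum lt' UNIV = 0"
    using rauzy_step_length_difference[OF TB step'] aiem by (simp add: is_aiem_def)
  ultimately show ?thesis
    by (simp add: is_aiem_def)
qed

lemma rauzy_step_invert_lengths:
  assumes TB: "last_letter pt \<noteq> last_letter pb"
    and step: "rauzy_step t (pt, pb, lt0, w) = (pt', pb', lt0', w')" and pos: "\<forall>a. 0 < lt' a"
  obtains lt where "\<forall>a. 0 < lt a" "rauzy_step t (pt, pb, lt, w) = (pt', pb', lt', w')"
    "t = TopT \<longleftrightarrow> exp (w (last_letter pb)) * lt (last_letter pb) < lt (last_letter pt)"
    "exp (w (last_letter pb)) * lt (last_letter pb) \<noteq> lt (last_letter pt)"
proof (cases t)
  let ?T = "last_letter pt" and ?B = "last_letter pb"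
  case TopT
  let ?lt = "lt'(?T := lt' ?T + exp (w ?B) * lt' ?B)"
  have "pt' = pt" "pb' = move_after pb ?B ?T" "w' = w(?B := w ?B + w ?T)"
    using step TopT by (auto simp: Let_def)
  moreover have "?lt(?T := ?lt ?T - exp (w ?B) * ?lt ?B) = lt'"
    using TB by (simp add: fun_eq_iff)
  ultimately have "rauzy_step t (pt, pb, ?lt, w) = (pt', pb', lt', w')"
    using TopT by (simp add: Let_def)
  moreover have "exp (w ?B) * ?lt ?B < ?lt ?T"
    using pos TB by simp
  ultimately show ?thesis
    using that[of ?lt] pos TopT by (simp add: add_pos_pos)
next
  let ?T = "last_letter pt" and ?B = "last_letter pb"
  case BotT
  let ?lt = "lt'(?T := lt' ?T * exp (w ?B), ?B := lt' ?B + lt' ?T)"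
  have "pb' = pb" "pt' = move_after pt ?T ?B" "w' = w(?T := w ?T + w ?B)"
    using step BotT by (auto simp: Let_def)
  moreover have "?lt(?T := ?lt ?T * exp (- w ?B), ?B := ?lt ?B - ?lt ?T * exp (- w ?B)) = lt'"
    using TB by (simp add: fun_eq_iff exp_minus)
  ultimately have "rauzy_step t (pt, pb, ?lt, w) = (pt', pb', lt', w')"
    using BotT by (simp add: Let_def)
  moreover have "exp (w ?B) * ?lt ?B > ?lt ?T"
    using pos TB by (simp add: algebra_simps)
  ultimately show ?thesis
    using that[of ?lt] pos BotT by (simp add: add_pos_pos)
qed

lemma rauzy_step_pullback:
  fixes pt pb :: "'a::finite \<Rightarrow> nat"
  assumes cd: "comb_data pt pb" and irr: "irreducible pt pb" and card: "2 \<le> CARD('a)"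
    and step: "rauzy_step t (pt, pb, lt0, w) = (pt', pb', lt0', w')" and aiem: "is_aiem lt' w'"
  shows "\<exists>lt. is_aiem lt w \<and> u_t (pt, pb, lt, w) \<noteq> u_b (pt, pb, lt, w) \<and>
           rv_type (pt, pb, lt, w) = t \<and> rv_step (pt, pb, lt, w) = (pt', pb', lt', w')"
proof -
  have TB: "last_letter pt \<noteq> last_letter pb"
    using irreducible_last_letters_distinct[OF _ _ irr card] cd by (simp add: comb_data_iff_ranking)
  have pos: "\<forall>a. 0 < lt' a"
    using aiem by (simp add: is_aiem_def)
  obtain lt where pos_lt: "\<forall>a. 0 < lt a" and step_lt: "rauzy_step t (pt, pb, lt, w) = (pt', pb', lt', w')"
    and type: "t = TopT \<longleftrightarrow> exp (w (last_letter pb)) * lt (last_letter pb) < lt (last_letter pt)"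
    and neq: "exp (w (last_letter pb)) * lt (last_letter pb) \<noteq> lt (last_letter pt)"
    by (rule rauzy_step_invert_lengths[OF TB step pos])
  have "(\<Sum>a\<in>UNIV. exp (w a) * lt a) - sum lt UNIV = 0"
    using rauzy_step_length_difference[OF TB step_lt] aiem by (simp add: is_aiem_def)
  then have aiem_lt: "is_aiem lt w"
    using pos_lt by (simp add: is_aiem_def)
  have "u_t (pt, pb, lt, w) - u_b (pt, pb, lt, w) =
        exp (w (last_letter pb)) * lt (last_letter pb) - lt (last_letter pt)"
    using is_aiem_u_t_minus_u_b[OF cd aiem_lt] .
  then have defined: "u_t (pt, pb, lt, w) \<noteq> u_b (pt, pb, lt, w)"
    and type_lt: "rv_type (pt, pb, lt, w) = t"
    using type neq by (cases t; auto simp: rv_type_def)+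
  have "rv_step (pt, pb, lt, w) = (pt', pb', lt', w')"
    unfolding rv_step_eq_rauzy_step type_lt by (rule step_lt)
  with aiem_lt defined type_lt show ?thesis
    by blast
qed

lemma rv_follows_Cons_card_ge_2:
  fixes pt pb :: "'a::finite \<Rightarrow> nat"
  shows "comb_data pt pb \<Longrightarrow> rv_follows (pt, pb, lt, w) (t # ts) \<Longrightarrow> 2 \<le> CARD('a)"
  using u_t_neq_u_b_card_ge_2[of pt pb lt w] by simp

lemma rauzy_step_data_indep:
  assumes "rauzy_step t (pt, pb, lt, w) = (p, q, l, v)" and "rauzy_step t (pt, pb, lt', w') = (p', q', l', v')"
  shows "p' = p \<and> q' = q \<and> (w' = w \<longrightarrow> v' = v)"
  using assms by (cases t) (auto simp: Let_def)

lemma fold_rauzy_step_data_indep: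
  assumes "fold rauzy_step \<gamma> (pt, pb, lt, w) = (p, q, l, v)"
    and "fold rauzy_step \<gamma> (pt, pb, lt', w') = (p', q', l', v')"
  shows "p' = p \<and> q' = q \<and> (w' = w \<longrightarrow> v' = v)"
  using assms
proof (induction \<gamma> arbitrary: pt pb lt w lt' w')
  case Nil
  then show ?case by simp
next
  case (Cons t ts)
  obtain p1 q1 l1 v1 where s: "rauzy_step t (pt, pb, lt, w) = (p1, q1, l1, v1)"
    by (metis prod_cases4)
  obtain p1' q1' l1' v1' where s': "rauzy_step t (pt, pb, lt', w') = (p1', q1', l1', v1')"
    by (metis prod_cases4)
  show ?case
    using rauzy_step_data_indep[OF s s'] Cons.IH[of p1 q1 l1 v1 l1' v1'] Cons.prems s s' by auto
qed

lemma rauzy_step_zero_slopes: "rauzy_step t (pt, pb, lt, \<lambda>_. 0) = (p, q, l, v) \<Longrightarrow> v = (\<lambda>_. 0)"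
  by (cases t) (auto simp: Let_def fun_eq_iff)

lemma fold_rauzy_step_zero_slopes:
  "fold rauzy_step \<gamma> (pt, pb, lt, \<lambda>_. 0) = (p, q, l, v) \<Longrightarrow> v = (\<lambda>_. 0)"
proof (induction \<gamma> arbitrary: pt pb lt)
  case Nil
  then show ?case by simp
next
  case (Cons t ts)
  obtain p1 q1 l1 v1 where s: "rauzy_step t (pt, pb, lt, \<lambda>_. 0) = (p1, q1, l1, v1)"
    by (metis prod_cases4)
  then show ?case
    using rauzy_step_zero_slopes[OF s] Cons by simp
qed

lemma rv_follows_fold_is_aiem:
  assumes "comb_data pt pb" "irreducible pt pb" "is_aiem lt w" "rv_follows (pt, pb, lt, w) \<gamma>"
    and "fold rauzy_step \<gamma> (pt, pb, lt, w) = (p, q, l, v)"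
  shows "is_aiem l v"
  using assms
proof (induction \<gamma> arbitrary: pt pb lt w)
  case Nil
  then show ?case by simp
next
  case (Cons t ts)
  obtain p1 q1 l1 v1 where s: "rv_step (pt, pb, lt, w) = (p1, q1, l1, v1)"
    by (metis prod_cases4)
  have defined: "u_t (pt, pb, lt, w) \<noteq> u_b (pt, pb, lt, w)" and type: "rv_type (pt, pb, lt, w) = t"
    and follows: "rv_follows (p1, q1, l1, v1) ts"
    using Cons.prems(4) s by auto
  have s': "rauzy_step t (pt, pb, lt, w) = (p1, q1, l1, v1)"
    using s type by (simp add: rv_step_eq_rauzy_step)
  have "comb_data p1 q1 \<and> irreducible p1 q1"
    using rauzy_step_comb_data[OF Cons.prems(1,2) u_t_neq_u_b_card_ge_2[OF Cons.prems(1) defined] s'] .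
  moreover have "is_aiem l1 v1"
    using rv_step_is_aiem[OF Cons.prems(1-3) defined s] .
  ultimately show ?case
    using Cons.IH[of p1 q1 l1 v1] follows Cons.prems(5) s' by simp
qed

lemma fold_rauzy_step_pullback:
  fixes pt pb :: "'a::finite \<Rightarrow> nat"
  assumes "comb_data pt pb" "irreducible pt pb" "\<gamma> \<noteq> [] \<Longrightarrow> 2 \<le> CARD('a)"
    and "fold rauzy_step \<gamma> (pt, pb, lt0, w) = (p, q, l0, v)" and "is_aiem l v"
  shows "\<exists>lt. is_aiem lt w \<and> rv_follows (pt, pb, lt, w) \<gamma> \<and> fold rauzy_step \<gamma> (pt, pb, lt, w) = (p, q, l, v)"
  using assms
proof (induction \<gamma> arbitrary: pt pb lt0 w)
  case Nil
  then show ?case by auto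
next
  case (Cons t ts)
  have card: "2 \<le> CARD('a)"
    using Cons.prems(3) by simp
  obtain p1 q1 l1 v1 where s: "rauzy_step t (pt, pb, lt0, w) = (p1, q1, l1, v1)"
    by (metis prod_cases4)
  have "comb_data p1 q1" "irreducible p1 q1"
    using rauzy_step_comb_data[OF Cons.prems(1,2) card s] by simp_all
  then obtain l1' where l1': "is_aiem l1' v1" "rv_follows (p1, q1, l1', v1) ts"
    "fold rauzy_step ts (p1, q1, l1', v1) = (p, q, l, v)"
    using Cons.IH[of p1 q1 l1 v1] card Cons.prems(4,5) s by auto
  obtain lt where "is_aiem lt w" "u_t (pt, pb, lt, w) \<noteq> u_b (pt, pb, lt, w)"
    "rv_type (pt, pb, lt, w) = t" "rv_step (pt, pb, lt, w) = (p1, q1, l1', v1)"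
    using rauzy_step_pullback[OF Cons.prems(1,2) card s l1'(1)] by blast
  then show ?case
    using l1' by (intro exI[of _ lt]) (simp add: rv_step_eq_rauzy_step)
qed

text \<open>The lengths of a standard i.e.m. and the log-slopes of an affine one are transformed by
  mutually contragredient elementary matrices, so their pairing is invariant.\<close>
lemma rauzy_step_pairing:
  assumes "last_letter pt \<noteq> last_letter pb"
    and "rauzy_step t (pt, pb, lam, \<lambda>_. 0) = (p, q, lam', z)"
    and "rauzy_step t (pt, pb, lt, v) = (p', q', l', v')"
  shows "(\<Sum>a\<in>UNIV. lam a * v a) = (\<Sum>a\<in>UNIV. lam' a * v' a)"
proof -
  let ?T = "last_letter pt" and ?B = "last_letter pb"
  have "(\<Sum>a\<in>UNIV. lam' a * v' a) = (\<Sum>a\<in>UNIV. lam a * v a)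
      + (lam' ?T * v' ?T - lam ?T * v ?T) + (lam' ?B * v' ?B - lam ?B * v ?B)"
    using assms by (intro sum_UNIV_change_two_points) (cases t; auto simp: Let_def)+
  moreover have "lam' ?T * v' ?T + lam' ?B * v' ?B = lam ?T * v ?T + lam ?B * v ?B"
    using assms by (cases t) (auto simp: Let_def algebra_simps)
  ultimately show ?thesis
    by simp
qed

lemma fold_rauzy_step_pairing:
  fixes pt pb :: "'a::finite \<Rightarrow> nat"
  assumes "comb_data pt pb" "irreducible pt pb" "\<gamma> \<noteq> [] \<Longrightarrow> 2 \<le> CARD('a)"
    and "fold rauzy_step \<gamma> (pt, pb, lam, \<lambda>_. 0) = (p, q, lam1, z)"
    and "fold rauzy_step \<gamma> (pt, pb, lt, v) = (p', q', l1, v1)"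
  shows "(\<Sum>a\<in>UNIV. lam a * v a) = (\<Sum>a\<in>UNIV. lam1 a * v1 a)"
  using assms
proof (induction \<gamma> arbitrary: pt pb lam lt v)
  case Nil
  then show ?case by simp
next
  case (Cons t ts)
  have card: "2 \<le> CARD('a)"
    using Cons.prems(3) by simp
  obtain p0 q0 lam0 z0 where s0: "rauzy_step t (pt, pb, lam, \<lambda>_. 0) = (p0, q0, lam0, z0)"
    by (metis prod_cases4)
  obtain p2 q2 l2 v2 where s: "rauzy_step t (pt, pb, lt, v) = (p2, q2, l2, v2)"
    by (metis prod_cases4)
  have "p2 = p0" "q2 = q0" "z0 = (\<lambda>_. 0)"
    using rauzy_step_data_indep[OF s0 s] rauzy_step_zero_slopes[OF s0] by simp_all
  moreover have "comb_data p0 q0" "irreducible p0 q0"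
    using rauzy_step_comb_data[OF Cons.prems(1,2) card s0] by simp_all
  moreover have "last_letter pt \<noteq> last_letter pb"
    using Cons.prems(1,2) card by (simp add: comb_data_iff_ranking irreducible_last_letters_distinct)
  ultimately show ?case
    using rauzy_step_pairing[OF _ s0 s] Cons.IH[of p0 q0 lam0 l2 v2] card Cons.prems(4,5) s0 s by simp
qed

lemma pos_orthogonal_transfer_sgn:
  fixes f g :: "'a::finite \<Rightarrow> real"
  assumes sgn: "\<And>a. sgn (f a) = sgn (g a)" and "\<forall>a. 0 < x a" and "(\<Sum>a\<in>UNIV. x a * f a) = 0"
  shows "\<exists>y. (\<forall>a. 0 < y a) \<and> (\<Sum>a\<in>UNIV. y a * g a) = 0"
proof -
  define y where "y a = (if g a = 0 then x a else x a * (f a / g a))" for a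
  have "0 < y a" for a
  proof (cases "g a = 0")
    case False
    then have "0 < f a / g a"
      using sgn[of a] by (auto simp: sgn_if zero_less_divide_iff split: if_splits)
    then have "0 < x a * (f a / g a)"
      using assms(2) by (intro mult_pos_pos) auto
    then show ?thesis
      using False by (simp add: y_def)
  qed (use assms(2) in \<open>simp add: y_def\<close>)
  moreover have "y a * g a = x a * f a" for a
    using sgn[of a] by (auto simp: y_def sgn_if split: if_splits)
  ultimately show ?thesis
    using assms(3) by (intro exI[of _ y]) simp
qed

text \<open>is_aiem lt w says that lt is positive and orthogonal to exp w - 1, which has the sign of w.\<close>
lemma ex_is_aiem_iff_pos_orthogonal:
  fixes w :: "'a::finite \<Rightarrow> real"
  shows "(\<exists>lt. is_aiem lt w) \<longleftrightarrow> (\<exists>x. (\<forall>a. 0 < x a) \<and> (\<Sum>a\<in>UNIV. x a * w a) = 0)"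
proof -
  have "is_aiem lt w \<longleftrightarrow> (\<forall>a. 0 < lt a) \<and> (\<Sum>a\<in>UNIV. lt a * (exp (w a) - 1)) = 0" for lt
    by (simp add: is_aiem_def algebra_simps sum_subtractf)
  moreover have "sgn (exp (w a) - 1) = sgn (w a)" for a
    by (simp add: sgn_if)
  ultimately show ?thesis
    using pos_orthogonal_transfer_sgn[of "\<lambda>a. exp (w a) - 1" w]
      pos_orthogonal_transfer_sgn[of w "\<lambda>a. exp (w a) - 1"] by auto
qed

lemma ex_aiem_rv_follows_iff:
  fixes pt pb :: "'a::finite \<Rightarrow> nat"
  assumes cd: "comb_data pt pb" and irr: "irreducible pt pb" and card: "\<gamma> \<noteq> [] \<Longrightarrow> 2 \<le> CARD('a)"
    and run: "fold rauzy_step \<gamma> (pt, pb, lt0, w) = (p, q, l0, v)"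
  shows "(\<exists>lt. is_aiem lt w \<and> rv_follows (pt, pb, lt, w) \<gamma>) \<longleftrightarrow>
         (\<exists>x. (\<forall>a. 0 < x a) \<and> (\<Sum>a\<in>UNIV. x a * v a) = 0)"
proof
  assume "\<exists>lt. is_aiem lt w \<and> rv_follows (pt, pb, lt, w) \<gamma>"
  then obtain lt where lt: "is_aiem lt w" "rv_follows (pt, pb, lt, w) \<gamma>"
    by blast
  obtain p' q' l v' where run': "fold rauzy_step \<gamma> (pt, pb, lt, w) = (p', q', l, v')"
    by (metis prod_cases4)
  have "is_aiem l v"
    using rv_follows_fold_is_aiem[OF cd irr lt run'] fold_rauzy_step_data_indep[OF run' run] by simp
  then show "\<exists>x. (\<forall>a. 0 < x a) \<and> (\<Sum>a\<in>UNIV. x a * v a) = 0"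
    using ex_is_aiem_iff_pos_orthogonal by blast
next
  assume "\<exists>x. (\<forall>a. 0 < x a) \<and> (\<Sum>a\<in>UNIV. x a * v a) = 0"
  then obtain l where "is_aiem l v"
    using ex_is_aiem_iff_pos_orthogonal by blast
  then show "\<exists>lt. is_aiem lt w \<and> rv_follows (pt, pb, lt, w) \<gamma>"
    using fold_rauzy_step_pullback[OF cd irr card run] by blast
qed

lemma ex_standard_rv_follows_iff:
  fixes pt pb :: "'a::finite \<Rightarrow> nat"
  assumes cd: "comb_data pt pb" and irr: "irreducible pt pb" and card: "\<gamma> \<noteq> [] \<Longrightarrow> 2 \<le> CARD('a)"
    and run: "fold rauzy_step \<gamma> (pt, pb, lt0, w) = (p, q, l0, v)"
  shows "(\<exists>lam. (\<forall>a. 0 < lam a) \<and> (\<Sum>a\<in>UNIV. lam a * w a) = 0 \<and> rv_follows (pt, pb, lam, \<lambda>_. 0) \<gamma>) \<longleftrightarrow>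
         (\<exists>x. (\<forall>a. 0 < x a) \<and> (\<Sum>a\<in>UNIV. x a * v a) = 0)"
proof
  assume "\<exists>lam. (\<forall>a. 0 < lam a) \<and> (\<Sum>a\<in>UNIV. lam a * w a) = 0 \<and> rv_follows (pt, pb, lam, \<lambda>_. 0) \<gamma>"
  then obtain lam where lam: "\<forall>a. 0 < lam a" "(\<Sum>a\<in>UNIV. lam a * w a) = 0"
    "rv_follows (pt, pb, lam, \<lambda>_. 0) \<gamma>"
    by blast
  obtain p' q' lam1 z where run0: "fold rauzy_step \<gamma> (pt, pb, lam, \<lambda>_. 0) = (p', q', lam1, z)"
    by (metis prod_cases4)
  have "is_aiem lam1 z"
    using rv_follows_fold_is_aiem[OF cd irr _ lam(3) run0] lam(1) by (simp add: is_aiem_def)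
  moreover have "(\<Sum>a\<in>UNIV. lam1 a * v a) = 0"
    using fold_rauzy_step_pairing[OF cd irr card run0 run] lam(2) by simp
  ultimately show "\<exists>x. (\<forall>a. 0 < x a) \<and> (\<Sum>a\<in>UNIV. x a * v a) = 0"
    by (auto simp: is_aiem_def)
next
  assume "\<exists>x. (\<forall>a. 0 < x a) \<and> (\<Sum>a\<in>UNIV. x a * v a) = 0"
  then obtain x where x: "\<forall>a. 0 < x a" "(\<Sum>a\<in>UNIV. x a * v a) = 0"
    by blast
  obtain p' q' l0' z where run0: "fold rauzy_step \<gamma> (pt, pb, lt0, \<lambda>_. 0) = (p', q', l0', z)"
    by (metis prod_cases4)
  have "is_aiem x z"
    using x(1) fold_rauzy_step_zero_slopes[OF run0] by (simp add: is_aiem_def)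
  then obtain lam where lam: "is_aiem lam (\<lambda>_. 0)" "rv_follows (pt, pb, lam, \<lambda>_. 0) \<gamma>"
    "fold rauzy_step \<gamma> (pt, pb, lam, \<lambda>_. 0) = (p', q', x, z)"
    using fold_rauzy_step_pullback[OF cd irr card run0] by blast
  have "(\<Sum>a\<in>UNIV. lam a * w a) = 0"
    using fold_rauzy_step_pairing[OF cd irr card lam(3) run] x(2) by simp
  then show "\<exists>lam. (\<forall>a. 0 < lam a) \<and> (\<Sum>a\<in>UNIV. lam a * w a) = 0 \<and> rv_follows (pt, pb, lam, \<lambda>_. 0) \<gamma>"
    using lam(1,2) by (auto simp: is_aiem_def)
qed

theorem lemma2:
  fixes pt pb :: "'a::finite \<Rightarrow> nat" and w :: "'a \<Rightarrow> real" and \<gamma> :: "rtype list"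
  assumes "comb_data pt pb" and "irreducible pt pb"
  shows "(\<exists>lt. is_aiem lt w \<and> rv_follows (pt, pb, lt, w) \<gamma>) \<longleftrightarrow>
         (\<exists>lam. (\<forall>a. lam a > 0) \<and> (\<Sum>a\<in>UNIV. lam a * w a) = 0 \<and> rv_follows (pt, pb, lam, (\<lambda>_. 0)) \<gamma>)"
proof (cases "\<gamma> \<noteq> [] \<and> CARD('a) < 2")
  case True
  then have "\<not> rv_follows (pt, pb, lt, v) \<gamma>" for lt v
    using rv_follows_Cons_card_ge_2[OF assms(1)] by (cases \<gamma>) fastforce+
  then show ?thesis
    by blast
next
  case False
  then have card: "\<gamma> \<noteq> [] \<Longrightarrow> 2 \<le> CARD('a)"
    by linarith
  obtain p q l v where run: "fold rauzy_step \<gamma> (pt, pb, \<lambda>_. 1, w) = (p, q, l, v)"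
    by (metis prod_cases4)
  show ?thesis
    using ex_aiem_rv_follows_iff[OF assms card run] ex_standard_rv_follows_iff[OF assms card run] by simp
qed

end
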